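(* Let $A$ be a finite set, $p : A \to [0,1]$, and $\gamma : \mathbb{N}^* \to (0,1]$ non-increasing; set $p_i(u) := \gamma(i)p(u)$. Let $\{X_i(u)\}_{i\ge1,u\in A}$ be independent with $X_i(u)\sim\mathrm{Bernoulli}(p_i(u))$. For $n \ge 1$ define $Z_n(u) := \mathds{1}\{X_1(u)=\dots=X_n(u)=0\}$, $R_n := \sum_{u\in A} Z_n(u)\,p_{n+1}(u)$, \[ U^\gamma_n(u) := \sum_{i=1}^n \mathds{1}\{X_i(u)=1,\ X_j(u)=0\ \forall j\in\{1,\dots,n\}\setminus\{i\}\}\,\frac{\gamma(n+1)}{\gamma(i)}, \] $\hat R_n := \frac1n\sum_{u\in A}U^\gamma_n(u)$, $\lambda := \sum_{u\in A}p(u)$ and $\lambda_m := \gamma(m)\lambda$. For $\delta\in(0,1)$ let \[ \beta_n := (1+\sqrt2)\sqrt{\frac{\lambda_{n+1}\log(4/\delta)}{n}} + \frac{1}{3n}\log\frac4\delta . \] Then with probability at least $1-\delta$, \[ -\beta_n - \frac{\lambda}{n} \le R_n - \hat R_n \le \beta_n . \]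
   Context: Influencer fatigue model: at the $i$-th selection of the influencer, node $u$ is activated with probability $\gamma(i)p(u)$, independently across nodes and selections. $R_n$ is the remaining potential for the $(n+1)$-th selection, $\hat R_n$ the reweighted Good-Turing estimator. *)

theory Defs
  imports "HOL-Probability.Probability"
begin

text \<open>Influencer fatigue model. X i u w is the indicator that node u is activated
at the i-th selection (i >= 1), in outcome w.\<close>

definition Zn :: "(nat \<Rightarrow> 'a \<Rightarrow> 'w \<Rightarrow> bool) \<Rightarrow> nat \<Rightarrow> 'a \<Rightarrow> 'w \<Rightarrow> bool" where
  "Zn X n u w = (\<forall>j\<in>{1..n}. \<not> X j u w)"

definition Rn :: "'a set \<Rightarrow> ('a \<Rightarrow> real) \<Rightarrow> (nat \<Rightarrow> real) \<Rightarrow> (nat \<Rightarrow> 'a \<Rightarrow> 'w \<Rightarrow> bool)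
    \<Rightarrow> nat \<Rightarrow> 'w \<Rightarrow> real" where
  "Rn A p \<gamma> X n w = (\<Sum>u\<in>A. (if Zn X n u w then 1 else 0) * (\<gamma> (n+1) * p u))"

definition Ugamma :: "(nat \<Rightarrow> real) \<Rightarrow> (nat \<Rightarrow> 'a \<Rightarrow> 'w \<Rightarrow> bool) \<Rightarrow> nat \<Rightarrow> 'a \<Rightarrow> 'w \<Rightarrow> real" where
  "Ugamma \<gamma> X n u w = (\<Sum>i=1..n.
      (if X i u w \<and> (\<forall>j\<in>{1..n} - {i}. \<not> X j u w) then 1 else 0) * (\<gamma> (n+1) / \<gamma> i))"

definition Rhat :: "'a set \<Rightarrow> (nat \<Rightarrow> real) \<Rightarrow> (nat \<Rightarrow> 'a \<Rightarrow> 'w \<Rightarrow> bool) \<Rightarrow> nat \<Rightarrow> 'w \<Rightarrow> real" where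
  "Rhat A \<gamma> X n w = (1 / real n) * (\<Sum>u\<in>A. Ugamma \<gamma> X n u w)"

definition lam :: "'a set \<Rightarrow> ('a \<Rightarrow> real) \<Rightarrow> real" where
  "lam A p = (\<Sum>u\<in>A. p u)"

definition beta :: "'a set \<Rightarrow> ('a \<Rightarrow> real) \<Rightarrow> (nat \<Rightarrow> real) \<Rightarrow> real \<Rightarrow> nat \<Rightarrow> real" where
  "beta A p \<gamma> \<delta> n =
     (1 + sqrt 2) * sqrt (\<gamma> (n+1) * lam A p * ln (4 / \<delta>) / real n)
     + ln (4 / \<delta>) / (3 * real n)"

end

theory Submission
  imports Defs
begin

text \<open>Write D(u) = Z_n(u) p_{n+1}(u) - U_n(u) / n, so that R_n - Rhat_n is the sum of the D(u):
  independent bounded terms, each depending only on the activations of node u. An exact computation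
  gives -p_{n+1}(u) / n \<le> E D(u) \<le> 0, so the estimator overshoots by at most \<lambda> / n on average.
  On Z_n(u) = 1 the term equals p_{n+1}(u), an event of probability at most exp (-n p_{n+1}(u));
  otherwise it equals -U_n(u) / n with 0 \<le> U_n(u) \<le> 1. Bounding exp (t D(u)) separately on the
  two events, and using q^2 exp (-(n - t) q) \<le> q / (n - t) to absorb the first one, shows that the
  sum is sub-gamma with variance factor 2 \<lambda>_{n+1} / n and scale 1 / n for the upper tail,
  1 / (3 n) for the lower tail. The Chernoff bound with L = ln (4 / \<delta>) bounds each tail by
  \<delta> / 4.\<close>

section \<open>Elementary inequalities\<close>

lemma exp_minus_one_minus_sums: "(\<lambda>k. (y::real) ^ (k+2) / fact (k+2)) sums (exp y - 1 - y)"
proof -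
  have "(\<lambda>k. y ^ k / fact k) sums exp y"
    using exp_converges[of y] by (simp add: divide_inverse mult.commute)
  from sums_split_initial_segment[OF this, of 2] show ?thesis
    by (simp add: numeral_2_eq_2 algebra_simps)
qed

lemma two_mult_three_pow_le_fact: "2 * 3 ^ k \<le> (fact (k+2) :: real)"
proof (induction k)
  case 0
  then show ?case by simp
next
  case (Suc k)
  have "2 * 3 ^ Suc k = 3 * (2 * 3 ^ k :: real)" by simp
  also have "\<dots> \<le> real (k+3) * fact (k+2)"
    using Suc by (intro mult_mono) auto
  also have "\<dots> = fact (Suc k + 2)"
    by (simp only: add_Suc fact_Suc) (simp add: algebra_simps)
  finally show ?case .
qed

lemma exp_minus_one_minus_le_exp:
  assumes "0 \<le> (y::real)"
  shows "exp y - 1 - y \<le> y\<^sup>2 * exp y / 2"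
proof -
  have series: "(\<lambda>k. y\<^sup>2 / 2 * (y ^ k / fact k)) sums (y\<^sup>2 / 2 * exp y)"
    using exp_converges[of y] by (intro sums_mult) (simp add: divide_inverse mult.commute)
  have termwise: "y ^ (k+2) / fact (k+2) \<le> y\<^sup>2 / 2 * (y ^ k / fact k)" for k
  proof -
    have "2 * fact k \<le> (fact (k+2) :: real)"
      by (simp add: algebra_simps)
    then have "y ^ (k+2) / fact (k+2) \<le> y ^ (k+2) / (2 * fact k)"
      by (intro divide_left_mono) (use assms in auto)
    also have "\<dots> = y\<^sup>2 / 2 * (y ^ k / fact k)"
      by (simp add: power_add power2_eq_square field_simps)
    finally show ?thesis .
  qed
  from sums_le[OF termwise exp_minus_one_minus_sums series] show ?thesis
    by simp
qed

lemma exp_minus_one_minus_le_Bernstein: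
  assumes "0 \<le> (y::real)" "y < 3"
  shows "exp y - 1 - y \<le> y\<^sup>2 / (2 * (1 - y / 3))"
proof -
  have series: "(\<lambda>k. y\<^sup>2 / 2 * (y / 3) ^ k) sums (y\<^sup>2 / 2 * (1 / (1 - y / 3)))"
    using assms by (intro sums_mult geometric_sums) simp
  have termwise: "y ^ (k+2) / fact (k+2) \<le> y\<^sup>2 / 2 * (y / 3) ^ k" for k
  proof -
    have "y ^ (k+2) / fact (k+2) \<le> y ^ (k+2) / (2 * 3 ^ k)"
      by (intro divide_left_mono two_mult_three_pow_le_fact) (use assms in auto)
    also have "\<dots> = y\<^sup>2 / 2 * (y / 3) ^ k"
      by (simp add: power_add power_divide power2_eq_square field_simps)
    finally show ?thesis .
  qed
  from sums_le[OF termwise exp_minus_one_minus_sums series] show ?thesis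
    by simp
qed

lemma exp_neg_minus_one_plus_le:
  assumes "0 \<le> (y::real)"
  shows "exp (- y) - 1 + y \<le> y\<^sup>2 / 2"
proof -
  define g where "g x = 1 - x + x\<^sup>2 / 2 - exp (- x)" for x :: real
  have "g 0 \<le> g y"
  proof (rule DERIV_nonneg_imp_nondecreasing[OF assms])
    fix x
    have "(g has_real_derivative (x - 1 + exp (- x))) (at x)"
      unfolding g_def by (auto intro!: derivative_eq_intros simp: power2_eq_square)
    moreover have "0 \<le> x - 1 + exp (- x)"
      using exp_ge_add_one_self[of "- x"] by simp
    ultimately show "\<exists>d. (g has_real_derivative d) (at x) \<and> 0 \<le> d" by blast
  qed
  then show ?thesis by (simp add: g_def)
qed

lemma sq_mult_exp_neg_le:
  assumes "0 \<le> (x::real)" "0 < a"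
  shows "x\<^sup>2 * exp (- (a * x)) \<le> x / a"
proof -
  have "a * x \<le> exp (a * x - 1)"
    using exp_ge_add_one_self[of "a * x - 1"] by simp
  also have "\<dots> \<le> exp (a * x)" by simp
  finally have "a * x * exp (- (a * x)) \<le> 1"
    by (simp add: exp_minus field_simps)
  then have "x * (a * x * exp (- (a * x))) \<le> x"
    using assms(1) by (simp add: mult_left_le)
  then show ?thesis
    using assms by (simp add: field_simps power2_eq_square)
qed

lemma exp_neg_le_quadratic:
  assumes "0 \<le> (u::real)" "u \<le> 1" "0 \<le> s"
  shows "exp (- (s * u)) \<le> 1 - s * u + s\<^sup>2 * u / 2"
proof -
  have "u * u \<le> u" using assms by (simp add: mult_left_le)
  have "exp (- (s * u)) - 1 + s * u \<le> (s * u)\<^sup>2 / 2"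
    using assms by (intro exp_neg_minus_one_plus_le) simp
  also have "\<dots> = s\<^sup>2 * (u * u) / 2"
    by (simp add: power2_eq_square algebra_simps)
  also have "\<dots> \<le> s\<^sup>2 * u / 2"
    using \<open>u * u \<le> u\<close> by (simp add: mult_left_mono)
  finally show ?thesis by simp
qed

lemma exp_le_Bernstein:
  assumes "0 \<le> (u::real)" "u \<le> 1" "0 \<le> s" "s < 3"
  shows "exp (s * u) \<le> 1 + s * u + s\<^sup>2 * u / (2 * (1 - s / 3))"
proof -
  have "s * u \<le> s" "u * u \<le> u" using assms by (simp_all add: mult_left_le)
  have "exp (s * u) - 1 - s * u \<le> (s * u)\<^sup>2 / (2 * (1 - s * u / 3))"
    using assms \<open>s * u \<le> s\<close> by (intro exp_minus_one_minus_le_Bernstein) auto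
  also have "\<dots> \<le> s\<^sup>2 * u / (2 * (1 - s / 3))"
  proof (rule frac_le)
    have "(s * u)\<^sup>2 = s\<^sup>2 * (u * u)"
      by (simp add: power2_eq_square algebra_simps)
    then show "(s * u)\<^sup>2 \<le> s\<^sup>2 * u"
      using \<open>u * u \<le> u\<close> by (simp add: mult_left_mono)
  qed (use assms \<open>s * u \<le> s\<close> in auto)
  finally show ?thesis by simp
qed

text \<open>Unless \<open>(1 + sqrt 2) r + L / (3 N)\<close> is at least the largest possible value \<open>Q\<close> of the
  deviation, it dominates the threshold \<open>2 r + L / N\<close> produced by the Chernoff bound.\<close>

lemma Bernstein_threshold_le_beta:
  fixes r L N Q :: real
  assumes "0 \<le> r" "0 < L" "0 < N" "r\<^sup>2 = Q * L / N"
    and less: "(1 + sqrt 2) * r + L / (3 * N) < Q"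
  shows "2 * r + L / N \<le> (1 + sqrt 2) * r + L / (3 * N)"
proof -
  have "0 < L / (3 * N)" "0 \<le> (1 + sqrt 2) * r"
    using assms by simp_all
  then have "(1 + sqrt 2) * r < Q" "0 < Q"
    using less by linarith+
  then have "0 < r\<^sup>2"
    using assms by simp
  then have "0 < r"
    using \<open>0 \<le> r\<close> by (simp add: zero_less_power2)
  have "(1 + sqrt 2) * r * (L / N) < Q * (L / N)"
    using \<open>(1 + sqrt 2) * r < Q\<close> assms by (intro mult_strict_right_mono) auto
  also have "\<dots> = r * r"
    using assms by (simp add: power2_eq_square)
  finally have "(1 + sqrt 2) * (L / N) * r < r * r"
    by (simp add: ac_simps)
  then have "(1 + sqrt 2) * (L / N) < r"
    using \<open>0 < r\<close> by (simp only: mult_less_cancel_right_pos)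
  have "(sqrt 2 - 1) * (1 + sqrt 2) = 1"
    by (simp add: algebra_simps)
  then have "L / N = (sqrt 2 - 1) * ((1 + sqrt 2) * (L / N))"
    by (simp only: mult.assoc[symmetric] mult_1)
  also have "\<dots> \<le> (sqrt 2 - 1) * r"
    using \<open>(1 + sqrt 2) * (L / N) < r\<close> by (intro mult_left_mono) auto
  also have "\<dots> = sqrt 2 * r - r"
    by (simp add: algebra_simps)
  finally have "L / N \<le> sqrt 2 * r - r" .
  moreover have "L / N = 3 * (L / (3 * N))" "(1 + sqrt 2) * r = r + sqrt 2 * r"
    by (simp_all add: algebra_simps)
  ultimately show ?thesis
    using \<open>0 < L / (3 * N)\<close> by linarith
qed

section \<open>Probabilistic tools\<close>

lemma (in prob_space) sub_gamma_upper_tail: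
  assumes [measurable]: "S \<in> borel_measurable M"
    and integrable: "\<And>t. 0 < t \<Longrightarrow> t < 1 / c \<Longrightarrow> integrable M (\<lambda>w. exp (t * S w))"
    and mgf: "\<And>t. 0 < t \<Longrightarrow> t < 1 / c \<Longrightarrow>
      (\<integral>w. exp (t * S w) \<partial>M) \<le> exp (t * \<mu> + v * t\<^sup>2 / (2 * (1 - c * t)))"
    and "0 < v" "0 < c" "0 \<le> L"
  shows "prob {w \<in> space M. \<mu> + sqrt (2 * v * L) + c * L \<le> S w} \<le> exp (- L)"
proof (cases "L = 0")
  case False
  define a where "a = sqrt (2 * v * L)"
  define D where "D = v + c * a"
  have "0 < a" "0 < D"
    using assms False by (auto simp: a_def D_def add_pos_pos)
  have a2: "a\<^sup>2 = 2 * v * L"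
    using assms by (simp add: a_def)
  \<comment> \<open>the optimal Chernoff parameter\<close>
  define t where "t = a / D"
  have t: "0 < t" "t < 1 / c"
    using \<open>0 < a\<close> \<open>0 < D\<close> assms by (auto simp: t_def D_def field_simps)
  have ct: "1 - c * t = v / D"
    using \<open>0 < D\<close> by (simp add: t_def D_def field_simps)
  have variance_term: "v * t\<^sup>2 / (2 * (1 - c * t)) = a\<^sup>2 / (2 * D)"
    unfolding ct using \<open>0 < D\<close> \<open>0 < v\<close> by (simp add: t_def field_simps power2_eq_square)
  have threshold_term: "t * (\<mu> + a + c * L) = t * \<mu> + (a\<^sup>2 + c * a * L) / D"
    by (simp add: t_def power2_eq_square add_divide_distrib algebra_simps)
  have "t * \<mu> + v * t\<^sup>2 / (2 * (1 - c * t)) - t * (\<mu> + a + c * L)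
      = (a\<^sup>2 / 2 - (a\<^sup>2 + c * a * L)) / D"
    unfolding variance_term threshold_term using \<open>0 < D\<close> by (simp add: field_simps)
  also have "a\<^sup>2 / 2 - (a\<^sup>2 + c * a * L) = - (L * D)"
    by (simp add: a2 D_def algebra_simps)
  finally have exponent: "t * \<mu> + v * t\<^sup>2 / (2 * (1 - c * t)) - t * (\<mu> + a + c * L) = - L"
    using \<open>0 < D\<close> by simp
  have "prob {w \<in> space M. \<mu> + a + c * L \<le> S w}
      = prob {w \<in> space M. exp (t * (\<mu> + a + c * L)) \<le> exp (t * S w)}"
    using t by simp
  also have "\<dots> \<le> (\<integral>w. exp (t * S w) \<partial>M) / exp (t * (\<mu> + a + c * L))"
    by (intro integral_Markov_inequality_measure[where A = "space M"] integrable t) auto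
  also have "\<dots> \<le> exp (t * \<mu> + v * t\<^sup>2 / (2 * (1 - c * t))) / exp (t * (\<mu> + a + c * L))"
    by (intro divide_right_mono mgf t) auto
  also have "\<dots> = exp (- L)"
    by (simp only: exp_diff[symmetric] exponent)
  finally show ?thesis by (simp add: a_def)
qed simp

lemma measurable_PiM_finite_bool:
  assumes "finite K"
  shows "h \<in> measurable (PiM K (\<lambda>_. count_space (UNIV :: bool set))) (borel :: real measure)"
proof (rule measurableI)
  fix S :: "real set"
  let ?P = "PiM K (\<lambda>_. count_space (UNIV :: bool set))"
  assume "S \<in> sets borel"
  let ?T = "h -` S \<inter> space ?P"
  have "PiE K (\<lambda>k. {f k}) = {f}" if "f \<in> ?T" for f
    using that by (intro PiE_singleton) (auto simp: space_PiM PiE_def)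
  then have "?T = (\<Union>f\<in>?T. PiE K (\<lambda>k. {f k}))"
    by auto
  moreover have "finite ?T"
    using assms by (intro finite_subset[OF _ finite_PiE]) (auto simp: space_PiM)
  ultimately show "?T \<in> sets ?P"
    using assms by (metis (no_types, lifting) sets.finite_UN sets_PiM_I_finite sets_count_space UNIV_I Pow_UNIV)
qed simp

text \<open>A function determined by the block \<open>K j\<close> of the variables factors through the restriction
  to \<open>K j\<close>, and every such factor is measurable because the product space is finite and discrete.\<close>

lemma (in prob_space) indep_vars_local_functions:
  fixes X :: "'i \<Rightarrow> 'a \<Rightarrow> bool" and f :: "'j \<Rightarrow> 'a \<Rightarrow> real"
  assumes ind: "indep_vars (\<lambda>_. count_space UNIV) X I"
    and K: "\<And>j. j \<in> J \<Longrightarrow> finite (K j)" "\<And>j. j \<in> J \<Longrightarrow> K j \<subseteq> I" "disjoint_family_on K J"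
    and local: "\<And>j w w'. j \<in> J \<Longrightarrow> (\<forall>k\<in>K j. X k w = X k w') \<Longrightarrow> f j w = f j w'"
  shows "indep_vars (\<lambda>_. borel) f J"
proof -
  define h where "h j g = f j (SOME w. \<forall>k\<in>K j. X k w = g k)" for j g
  have "indep_vars (\<lambda>j. PiM (K j) (\<lambda>_. count_space UNIV)) (\<lambda>j w. restrict (\<lambda>k. X k w) (K j)) J"
    using ind K(2,3) by (rule indep_vars_restrict)
  then have "indep_vars (\<lambda>_. borel) (\<lambda>j w. h j (restrict (\<lambda>k. X k w) (K j))) J"
    by (rule indep_vars_compose2) (use K in \<open>auto intro: measurable_PiM_finite_bool\<close>)
  moreover have "(\<lambda>w. h j (restrict (\<lambda>k. X k w) (K j))) = f j" if "j \<in> J" for j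
  proof
    fix w
    have "\<exists>w'. \<forall>k\<in>K j. X k w' = restrict (\<lambda>k. X k w) (K j) k"
      by (intro exI[of _ w]) simp
    then have "\<forall>k\<in>K j. X k (SOME w'. \<forall>k\<in>K j. X k w' = restrict (\<lambda>k. X k w) (K j) k) = X k w"
      by (rule someI2_ex) simp
    then show "h j (restrict (\<lambda>k. X k w) (K j)) = f j w"
      unfolding h_def by (rule local[OF that])
  qed
  ultimately show ?thesis
    using indep_vars_cong[of J J "\<lambda>j w. h j (restrict (\<lambda>k. X k w) (K j))" f "\<lambda>_. borel" "\<lambda>_. borel"]
    by auto
qed

lemma (in prob_space) integral_exp_le_exp_integral:
  fixes Y B :: "'a \<Rightarrow> real"
  assumes "integrable M Y" "integrable M B" "integrable M (\<lambda>w. exp (Y w))"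
    and "\<And>w. w \<in> space M \<Longrightarrow> exp (Y w) \<le> 1 + Y w + B w"
  shows "(\<integral>w. exp (Y w) \<partial>M) \<le> exp ((\<integral>w. Y w \<partial>M) + (\<integral>w. B w \<partial>M))"
proof -
  have "(\<integral>w. exp (Y w) \<partial>M) \<le> (\<integral>w. 1 + Y w + B w \<partial>M)"
    by (rule Bochner_Integration.integral_mono) (use assms in auto)
  also have "\<dots> = 1 + ((\<integral>w. Y w \<partial>M) + (\<integral>w. B w \<partial>M))"
    using assms by (simp add: prob_space)
  also have "\<dots> \<le> exp ((\<integral>w. Y w \<partial>M) + (\<integral>w. B w \<partial>M))"
    by (rule exp_ge_add_one_self)
  finally show ?thesis .
qed

lemma (in prob_space) expectation_if:
  fixes c :: real
  assumes "(\<lambda>w. if P w then 1 else 0 :: real) \<in> borel_measurable M"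
  shows "(\<integral>w. (if P w then c else 0) \<partial>M) = c * prob {w \<in> space M. P w}"
proof -
  have "(\<lambda>w. if P w then 1 else 0 :: real) -` {1} \<inter> space M \<in> events"
    using assms by (rule measurable_sets) simp
  moreover have "(\<lambda>w. if P w then 1 else 0 :: real) -` {1} \<inter> space M = {w \<in> space M. P w}"
    by (auto split: if_splits)
  ultimately have "{w \<in> space M. P w} \<in> events"
    by simp
  have "(\<integral>w. (if P w then c else 0) \<partial>M) = (\<integral>w. c * indicator {w \<in> space M. P w} w \<partial>M)"
    by (intro Bochner_Integration.integral_cong) (auto simp: indicator_def)
  also have "\<dots> = c * prob {w \<in> space M. P w}"
    using \<open>{w \<in> space M. P w} \<in> events\<close> by simp
  finally show ?thesis .
qed

section \<open>The influencer fatigue model\<close>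

locale fatigue_model = prob_space M for M :: "'w measure" +
  fixes A :: "'u set" and p :: "'u \<Rightarrow> real" and \<gamma> :: "nat \<Rightarrow> real"
    and X :: "nat \<Rightarrow> 'u \<Rightarrow> 'w \<Rightarrow> bool" and n :: nat
  assumes finite_A: "finite A"
    and p_range: "\<forall>u\<in>A. 0 \<le> p u \<and> p u \<le> 1"
    and \<gamma>_range: "\<forall>i\<ge>1. 0 < \<gamma> i \<and> \<gamma> i \<le> 1"
    and \<gamma>_antimono: "\<forall>i j. 1 \<le> i \<longrightarrow> i \<le> j \<longrightarrow> \<gamma> j \<le> \<gamma> i"
    and indep_X: "indep_vars (\<lambda>_. count_space UNIV) (\<lambda>(i, u). X i u) ({1..} \<times> A)"
    and distr_X: "\<forall>i\<ge>1. \<forall>u\<in>A.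
      distr M (count_space UNIV) (X i u) = measure_pmf (bernoulli_pmf (\<gamma> i * p u))"
    and n_pos: "1 \<le> n"
begin

lemma \<gamma>_pos: "1 \<le> i \<Longrightarrow> 0 < \<gamma> i"
  using \<gamma>_range by auto

lemma \<gamma>_ratio_le_1: "i \<in> {1..n} \<Longrightarrow> \<gamma> (n+1) / \<gamma> i \<le> 1"
  using \<gamma>_pos[of i] \<gamma>_antimono by auto

lemma activation_prob_range: "1 \<le> i \<Longrightarrow> u \<in> A \<Longrightarrow> 0 \<le> \<gamma> i * p u \<and> \<gamma> i * p u \<le> 1"
  using \<gamma>_range p_range by (auto intro: mult_le_one)

definition p_next :: "'u \<Rightarrow> real" where
  "p_next u = \<gamma> (n+1) * p u"

lemma p_next_range: "u \<in> A \<Longrightarrow> 0 \<le> p_next u \<and> p_next u \<le> 1"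
  unfolding p_next_def by (rule activation_prob_range) simp

lemma measurable_X: "1 \<le> i \<Longrightarrow> u \<in> A \<Longrightarrow> X i u \<in> measurable M (count_space UNIV)"
  using indep_X unfolding indep_vars_def2 by auto

lemma prob_X_eq:
  assumes "1 \<le> i" "u \<in> A"
  shows "prob {w \<in> space M. X i u w = b} = (if b then \<gamma> i * p u else 1 - \<gamma> i * p u)"
proof -
  have "prob {w \<in> space M. X i u w = b} = measure (distr M (count_space UNIV) (X i u)) {b}"
    using measurable_X[OF assms] by (subst measure_distr) (auto simp: vimage_def Int_def conj_commute)
  also have "\<dots> = (if b then \<gamma> i * p u else 1 - \<gamma> i * p u)"
    using distr_X activation_prob_range[OF assms] assms by (simp add: measure_pmf_single)
  finally show ?thesis .
qed

lemma prob_pattern: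
  assumes "u \<in> A" "finite J" "J \<subseteq> {1..}"
  shows "prob {w \<in> space M. \<forall>j\<in>J. X j u w = b j}
    = (\<Prod>j\<in>J. if b j then \<gamma> j * p u else 1 - \<gamma> j * p u)"
proof (cases "J = {}")
  case False
  define E where "E k = (case k of (j, v) \<Rightarrow> X j v -` {b j} \<inter> space M)" for k
  have "indep_sets (\<lambda>k. {(case k of (i, u) \<Rightarrow> X i u) -` B \<inter> space M | B. B \<in> sets (count_space UNIV)})
      ({1..} \<times> A)"
    using indep_X unfolding indep_vars_def2 by auto
  then have "prob (\<Inter>k\<in>J \<times> {u}. E k) = (\<Prod>k\<in>J \<times> {u}. prob (E k))"
    by (rule indep_setsD) (use assms False in \<open>auto simp: E_def\<close>)
  moreover have "(\<Inter>k\<in>J \<times> {u}. E k) = {w \<in> space M. \<forall>j\<in>J. X j u w = b j}"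
    using False by (auto simp: E_def)
  moreover have "(\<Prod>k\<in>J \<times> {u}. prob (E k)) = (\<Prod>j\<in>J. prob (E (j, u)))"
  proof -
    have "J \<times> {u} = (\<lambda>j. (j, u)) ` J" by auto
    then show ?thesis by (simp add: prod.reindex inj_on_def)
  qed
  moreover have "prob (E (j, u)) = (if b j then \<gamma> j * p u else 1 - \<gamma> j * p u)" if "j \<in> J" for j
    using prob_X_eq[of j u "b j"] that assms by (auto simp: E_def vimage_def Int_def conj_commute)
  ultimately show ?thesis
    by simp
qed (simp add: prob_space)

lemma indep_vars_node_functions:
  fixes f :: "'u \<Rightarrow> 'w \<Rightarrow> real"
  assumes "\<And>u w w'. u \<in> A \<Longrightarrow> \<forall>j\<in>{1..n}. X j u w = X j u w' \<Longrightarrow> f u w = f u w'"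
  shows "indep_vars (\<lambda>_. borel) f A"
proof (rule indep_vars_local_functions[OF indep_X, where K = "\<lambda>u. {1..n} \<times> {u}"])
  show "disjoint_family_on (\<lambda>u. {1..n} \<times> {u}) A"
    by (auto simp: disjoint_family_on_def)
qed (use assms in auto)

lemma borel_measurable_node_function:
  fixes g :: "'w \<Rightarrow> real"
  assumes "u \<in> A" "\<And>w w'. \<forall>j\<in>{1..n}. X j u w = X j u w' \<Longrightarrow> g w = g w'"
  shows "g \<in> borel_measurable M"
proof -
  have "indep_vars (\<lambda>_. borel) (\<lambda>v. if v = u then g else (\<lambda>_. 0)) A"
    by (rule indep_vars_node_functions) (use assms in auto)
  then show ?thesis
    using assms(1) unfolding indep_vars_def2 by force
qed

definition only_at :: "'u \<Rightarrow> nat \<Rightarrow> 'w \<Rightarrow> real" where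
  "only_at u i w = (if X i u w \<and> (\<forall>j\<in>{1..n} - {i}. \<not> X j u w) then 1 else 0)"

definition node_deviation :: "'u \<Rightarrow> 'w \<Rightarrow> real" where
  "node_deviation u w = (if Zn X n u w then p_next u else 0) - Ugamma \<gamma> X n u w / real n"

lemma Zn_local: "\<forall>j\<in>{1..n}. X j u w = X j u w' \<Longrightarrow> Zn X n u w \<longleftrightarrow> Zn X n u w'"
  unfolding Zn_def by auto

lemma only_at_local: "\<forall>j\<in>{1..n}. X j u w = X j u w' \<Longrightarrow> i \<in> {1..n} \<Longrightarrow> only_at u i w = only_at u i w'"
  unfolding only_at_def by auto

lemma Ugamma_eq_sum_only_at: "Ugamma \<gamma> X n u w = (\<Sum>i=1..n. only_at u i w * (\<gamma> (n+1) / \<gamma> i))"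
  unfolding Ugamma_def only_at_def by simp

lemma Ugamma_local: "\<forall>j\<in>{1..n}. X j u w = X j u w' \<Longrightarrow> Ugamma \<gamma> X n u w = Ugamma \<gamma> X n u w'"
  unfolding Ugamma_eq_sum_only_at by (intro sum.cong refl) (simp add: only_at_local)

lemma node_deviation_local:
  assumes "\<forall>j\<in>{1..n}. X j u w = X j u w'"
  shows "node_deviation u w = node_deviation u w'"
  unfolding node_deviation_def using Zn_local[OF assms] Ugamma_local[OF assms] by simp

lemma borel_measurable_unseen:
  "u \<in> A \<Longrightarrow> (\<lambda>w. if Zn X n u w then c else 0 :: real) \<in> borel_measurable M"
  by (erule borel_measurable_node_function) (metis Zn_local)

lemma borel_measurable_only_at: "u \<in> A \<Longrightarrow> i \<in> {1..n} \<Longrightarrow> only_at u i \<in> borel_measurable M"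
  by (erule borel_measurable_node_function) (auto intro: only_at_local)

lemma borel_measurable_Ugamma: "u \<in> A \<Longrightarrow> Ugamma \<gamma> X n u \<in> borel_measurable M"
  by (erule borel_measurable_node_function) (rule Ugamma_local)

lemma borel_measurable_node_deviation: "u \<in> A \<Longrightarrow> node_deviation u \<in> borel_measurable M"
  by (erule borel_measurable_node_function) (rule node_deviation_local)

definition unseen_prob :: "'u \<Rightarrow> real" where
  "unseen_prob u = (\<Prod>j\<in>{1..n}. 1 - \<gamma> j * p u)"

definition unseen_except_prob :: "'u \<Rightarrow> nat \<Rightarrow> real" where
  "unseen_except_prob u i = (\<Prod>j\<in>{1..n} - {i}. 1 - \<gamma> j * p u)"

lemma prob_unseen: "u \<in> A \<Longrightarrow> prob {w \<in> space M. Zn X n u w} = unseen_prob u"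
  using prob_pattern[of u "{1..n}" "\<lambda>_. False"] by (simp add: Zn_def unseen_prob_def)

lemma prob_only_at:
  assumes "u \<in> A" "i \<in> {1..n}"
  shows "prob {w \<in> space M. X i u w \<and> (\<forall>j\<in>{1..n} - {i}. \<not> X j u w)}
    = \<gamma> i * p u * unseen_except_prob u i"
proof -
  have "{w \<in> space M. X i u w \<and> (\<forall>j\<in>{1..n} - {i}. \<not> X j u w)}
      = {w \<in> space M. \<forall>j\<in>{1..n}. X j u w = (j = i)}"
    using assms by auto
  moreover have "(\<Prod>j\<in>{1..n}. if j = i then \<gamma> j * p u else 1 - \<gamma> j * p u)
      = \<gamma> i * p u * unseen_except_prob u i"
    unfolding unseen_except_prob_def using assms by (subst prod.remove[of _ i]) auto
  ultimately show ?thesis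
    using prob_pattern[of u "{1..n}" "\<lambda>j. j = i"] assms by simp
qed

lemma unseen_prob_split: "i \<in> {1..n} \<Longrightarrow> unseen_prob u = (1 - \<gamma> i * p u) * unseen_except_prob u i"
  unfolding unseen_prob_def unseen_except_prob_def by (subst prod.remove[of _ i]) auto

lemma unseen_except_prob_range: "u \<in> A \<Longrightarrow> 0 \<le> unseen_except_prob u i \<and> unseen_except_prob u i \<le> 1"
  unfolding unseen_except_prob_def using activation_prob_range by (auto intro!: prod_nonneg prod_le_1)

lemma unseen_prob_le_exp:
  assumes "u \<in> A"
  shows "unseen_prob u \<le> exp (- (real n * p_next u))"
proof -
  have "unseen_prob u \<le> (\<Prod>j\<in>{1..n}. exp (- p_next u))"
    unfolding unseen_prob_def
  proof (rule prod_mono)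
    fix j assume j: "j \<in> {1..n}"
    have "p_next u \<le> \<gamma> j * p u"
      using \<gamma>_antimono p_range assms j unfolding p_next_def by (intro mult_right_mono) auto
    then show "0 \<le> 1 - \<gamma> j * p u \<and> 1 - \<gamma> j * p u \<le> exp (- p_next u)"
      using exp_ge_add_one_self[of "- p_next u"] activation_prob_range[of j u] j assms by auto
  qed
  also have "\<dots> = exp (- (real n * p_next u))"
    by (simp add: exp_of_nat_mult[symmetric])
  finally show ?thesis .
qed

lemma only_at_range: "0 \<le> only_at u i w" "only_at u i w \<le> 1"
  unfolding only_at_def by auto

lemma sum_only_at_le_1: "(\<Sum>i=1..n. only_at u i w) \<le> 1"
proof -
  let ?I = "{i \<in> {1..n}. X i u w \<and> (\<forall>j\<in>{1..n} - {i}. \<not> X j u w)}"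
  have "(\<Sum>i=1..n. only_at u i w) = real (card ?I)"
    unfolding only_at_def by (simp add: sum.If_cases Int_def conj_commute conj_left_commute)
  also have "card ?I \<le> 1"
    using card_le_Suc0_iff_eq[of ?I] by auto
  finally show ?thesis by simp
qed

lemma Ugamma_nonneg: "0 \<le> Ugamma \<gamma> X n u w"
  unfolding Ugamma_eq_sum_only_at using \<gamma>_pos
  by (intro sum_nonneg mult_nonneg_nonneg only_at_range divide_nonneg_nonneg) (auto intro: less_imp_le)

lemma Ugamma_le_1: "Ugamma \<gamma> X n u w \<le> 1"
proof -
  have "Ugamma \<gamma> X n u w \<le> (\<Sum>i=1..n. only_at u i w)"
    unfolding Ugamma_eq_sum_only_at
    by (intro sum_mono mult_left_le \<gamma>_ratio_le_1 only_at_range)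
  also have "\<dots> \<le> 1"
    by (rule sum_only_at_le_1)
  finally show ?thesis .
qed

lemma Ugamma_unseen: "Zn X n u w \<Longrightarrow> Ugamma \<gamma> X n u w = 0"
  unfolding Ugamma_eq_sum_only_at only_at_def Zn_def by (intro sum.neutral) auto

lemma node_deviation_unseen: "Zn X n u w \<Longrightarrow> node_deviation u w = p_next u"
  by (simp add: node_deviation_def Ugamma_unseen)

lemma node_deviation_seen: "\<not> Zn X n u w \<Longrightarrow> node_deviation u w = - (Ugamma \<gamma> X n u w / real n)"
  by (simp add: node_deviation_def)

lemma Ugamma_div_n_range: "0 \<le> Ugamma \<gamma> X n u w / real n" "Ugamma \<gamma> X n u w / real n \<le> 1"
  using Ugamma_nonneg[of u w] Ugamma_le_1[of u w] n_pos by (auto simp: field_simps)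

lemma node_deviation_le: "u \<in> A \<Longrightarrow> node_deviation u w \<le> p_next u"
  using node_deviation_unseen[of u w] node_deviation_seen[of u w] Ugamma_div_n_range[of u w]
    p_next_range[of u]
  by (cases "Zn X n u w") auto

lemma abs_node_deviation_le_1: "u \<in> A \<Longrightarrow> \<bar>node_deviation u w\<bar> \<le> 1"
  using node_deviation_unseen[of u w] node_deviation_seen[of u w] Ugamma_div_n_range[of u w]
    p_next_range[of u]
  by (cases "Zn X n u w") auto

lemma integrable_unseen: "u \<in> A \<Longrightarrow> integrable M (\<lambda>w. if Zn X n u w then c else 0 :: real)"
  by (rule integrable_const_bound[where B = "\<bar>c\<bar>"]) (auto intro: borel_measurable_unseen)

lemma integrable_only_at: "u \<in> A \<Longrightarrow> i \<in> {1..n} \<Longrightarrow> integrable M (only_at u i)"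
  by (rule integrable_const_bound[where B = 1]) (auto intro: borel_measurable_only_at simp: only_at_def)

lemma integrable_Ugamma: "u \<in> A \<Longrightarrow> integrable M (Ugamma \<gamma> X n u)"
  by (rule integrable_const_bound[where B = 1])
    (auto intro: borel_measurable_Ugamma simp: Ugamma_nonneg Ugamma_le_1)

lemma integrable_node_deviation: "u \<in> A \<Longrightarrow> integrable M (node_deviation u)"
  by (rule integrable_const_bound[where B = 1])
    (auto intro: borel_measurable_node_deviation abs_node_deviation_le_1)

lemma integrable_exp_node_deviation: "u \<in> A \<Longrightarrow> integrable M (\<lambda>w. exp (s * node_deviation u w))"
proof (rule integrable_const_bound[where B = "exp \<bar>s\<bar>"])
  assume "u \<in> A"
  have "s * node_deviation u w \<le> \<bar>s\<bar>" for w
  proof -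
    have "s * node_deviation u w \<le> \<bar>s\<bar> * \<bar>node_deviation u w\<bar>"
      by (metis abs_ge_self abs_mult)
    also have "\<dots> \<le> \<bar>s\<bar>"
      using abs_node_deviation_le_1[OF \<open>u \<in> A\<close>] by (simp add: mult_left_le)
    finally show ?thesis .
  qed
  then show "AE w in M. norm (exp (s * node_deviation u w)) \<le> exp \<bar>s\<bar>"
    by simp
  show "(\<lambda>w. exp (s * node_deviation u w)) \<in> borel_measurable M"
    using borel_measurable_node_deviation[OF \<open>u \<in> A\<close>] by measurable
qed

lemma expectation_unseen: "u \<in> A \<Longrightarrow> (\<integral>w. (if Zn X n u w then c else 0) \<partial>M) = c * unseen_prob u"
  using expectation_if[OF borel_measurable_unseen] prob_unseen by simp

lemma expectation_only_at:
  "u \<in> A \<Longrightarrow> i \<in> {1..n} \<Longrightarrow> (\<integral>w. only_at u i w \<partial>M) = \<gamma> i * p u * unseen_except_prob u i"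
  using expectation_if[of "\<lambda>w. X i u w \<and> (\<forall>j\<in>{1..n} - {i}. \<not> X j u w)" 1]
    borel_measurable_only_at prob_only_at
  by (simp add: only_at_def[abs_def])

lemma expectation_Ugamma:
  assumes "u \<in> A"
  shows "(\<integral>w. Ugamma \<gamma> X n u w \<partial>M) = (\<Sum>i=1..n. p_next u * unseen_except_prob u i)"
proof -
  have "(\<integral>w. Ugamma \<gamma> X n u w \<partial>M) = (\<Sum>i=1..n. (\<integral>w. only_at u i w \<partial>M) * (\<gamma> (n+1) / \<gamma> i))"
    unfolding Ugamma_eq_sum_only_at using integrable_only_at[OF assms] by simp
  also have "\<dots> = (\<Sum>i=1..n. p_next u * unseen_except_prob u i)"
  proof (rule sum.cong[OF refl])
    fix i assume "i \<in> {1..n}"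
    then have "\<gamma> i \<noteq> 0"
      using \<gamma>_pos[of i] by simp
    then show "(\<integral>w. only_at u i w \<partial>M) * (\<gamma> (n+1) / \<gamma> i) = p_next u * unseen_except_prob u i"
      using expectation_only_at[OF assms \<open>i \<in> {1..n}\<close>] by (simp add: p_next_def)
  qed
  finally show ?thesis .
qed

lemma expectation_Ugamma_le: "u \<in> A \<Longrightarrow> (\<integral>w. Ugamma \<gamma> X n u w \<partial>M) \<le> real n * p_next u"
  using expectation_Ugamma[of u] sum_mono[of "{1..n}" "\<lambda>i. p_next u * unseen_except_prob u i" "\<lambda>_. p_next u"]
    unseen_except_prob_range p_next_range
  by (simp add: mult_left_le)

lemma sum_prob_only_at_le_1:
  assumes "u \<in> A"
  shows "(\<Sum>i=1..n. \<gamma> i * p u * unseen_except_prob u i) \<le> 1"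
proof -
  have "(\<Sum>i=1..n. \<gamma> i * p u * unseen_except_prob u i) = (\<integral>w. (\<Sum>i=1..n. only_at u i w) \<partial>M)"
    using expectation_only_at[OF assms] integrable_only_at[OF assms] by simp
  also have "\<dots> \<le> (\<integral>w. 1 \<partial>M)"
    using integrable_only_at[OF assms] sum_only_at_le_1
    by (intro Bochner_Integration.integral_mono) auto
  finally show ?thesis
    by (simp add: prob_space)
qed

lemma expectation_node_deviation:
  assumes "u \<in> A"
  shows "(\<integral>w. node_deviation u w \<partial>M)
    = - p_next u * (\<Sum>i=1..n. \<gamma> i * p u * unseen_except_prob u i) / real n"
proof -
  let ?S = "\<Sum>i=1..n. \<gamma> i * p u * unseen_except_prob u i"
  have "(\<integral>w. node_deviation u w \<partial>M)
      = p_next u * unseen_prob u - (\<Sum>i=1..n. p_next u * unseen_except_prob u i) / real n"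
    unfolding node_deviation_def using assms
    by (simp add: integrable_unseen integrable_Ugamma expectation_unseen expectation_Ugamma)
  also have "(\<Sum>i=1..n. p_next u * unseen_except_prob u i)
      = (\<Sum>i=1..n. p_next u * unseen_prob u + p_next u * (\<gamma> i * p u * unseen_except_prob u i))"
    by (intro sum.cong refl) (simp add: unseen_prob_split algebra_simps)
  also have "\<dots> = real n * (p_next u * unseen_prob u) + p_next u * ?S"
    by (simp add: sum.distrib sum_distrib_left)
  finally show ?thesis
    using n_pos by (simp add: field_simps)
qed

lemma expectation_node_deviation_bounds:
  assumes "u \<in> A"
  shows "- p_next u / real n \<le> (\<integral>w. node_deviation u w \<partial>M)" "(\<integral>w. node_deviation u w \<partial>M) \<le> 0"
proof -
  let ?S = "\<Sum>i=1..n. \<gamma> i * p u * unseen_except_prob u i"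
  have "0 \<le> ?S"
    using activation_prob_range unseen_except_prob_range assms by (intro sum_nonneg) auto
  moreover have "?S \<le> 1"
    using assms by (rule sum_prob_only_at_le_1)
  moreover have "0 \<le> p_next u"
    using p_next_range assms by simp
  ultimately show "- p_next u / real n \<le> (\<integral>w. node_deviation u w \<partial>M)"
      "(\<integral>w. node_deviation u w \<partial>M) \<le> 0"
    unfolding expectation_node_deviation[OF assms]
    by (auto intro!: divide_right_mono simp: mult_left_le)
qed

lemma mgf_node_deviation_upper:
  assumes u: "u \<in> A" and t: "0 < t" "t < real n"
  shows "(\<integral>w. exp (t * node_deviation u w) \<partial>M)
    \<le> exp (t * (\<integral>w. node_deviation u w \<partial>M) + p_next u * t\<^sup>2 / (real n - t))"
proof -
  define q where "q = p_next u"
  have "0 \<le> q" using p_next_range u by (simp add: q_def)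
  define B where "B w = (if Zn X n u w then exp (t * q) - 1 - t * q else 0)
    + (t / real n)\<^sup>2 * Ugamma \<gamma> X n u w / 2" for w
  have pointwise: "exp (t * node_deviation u w) \<le> 1 + t * node_deviation u w + B w" for w
  proof (cases "Zn X n u w")
    case True
    then show ?thesis by (simp add: B_def q_def node_deviation_unseen Ugamma_unseen)
  next
    case False
    have "exp (- (t / real n * Ugamma \<gamma> X n u w))
        \<le> 1 - t / real n * Ugamma \<gamma> X n u w + (t / real n)\<^sup>2 * Ugamma \<gamma> X n u w / 2"
      using t by (intro exp_neg_le_quadratic Ugamma_nonneg Ugamma_le_1) simp
    then show ?thesis
      using False by (simp add: B_def node_deviation_seen)
  qed
  have "0 \<le> exp (t * q) - 1 - t * q"
    using exp_ge_add_one_self[of "t * q"] by linarith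
  then have "(exp (t * q) - 1 - t * q) * unseen_prob u \<le> (exp (t * q) - 1 - t * q) * exp (- (real n * q))"
    using unseen_prob_le_exp[OF u, folded q_def] by (simp add: mult_left_mono)
  also have "\<dots> \<le> (t * q)\<^sup>2 * exp (t * q) / 2 * exp (- (real n * q))"
    using t \<open>0 \<le> q\<close> by (intro mult_right_mono exp_minus_one_minus_le_exp) auto
  also have "\<dots> = t\<^sup>2 / 2 * (q\<^sup>2 * exp (- ((real n - t) * q)))"
    by (simp add: power_mult_distrib algebra_simps flip: exp_add)
  also have "\<dots> \<le> t\<^sup>2 / 2 * (q / (real n - t))"
    using t \<open>0 \<le> q\<close> by (intro mult_left_mono sq_mult_exp_neg_le) auto
  finally have unseen_part: "(exp (t * q) - 1 - t * q) * unseen_prob u \<le> q * t\<^sup>2 / (real n - t) / 2"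
    by (simp add: mult.commute)
  have "(t / real n)\<^sup>2 * (\<integral>w. Ugamma \<gamma> X n u w \<partial>M) / 2 \<le> (t / real n)\<^sup>2 * (real n * q) / 2"
    using expectation_Ugamma_le[OF u] by (intro divide_right_mono mult_left_mono) (auto simp: q_def)
  also have "\<dots> = q * t\<^sup>2 / (2 * real n)"
    using n_pos by (simp add: power2_eq_square field_simps)
  also have "\<dots> \<le> q * t\<^sup>2 / (2 * (real n - t))"
    using t \<open>0 \<le> q\<close> by (intro divide_left_mono) auto
  finally have seen_part: "(t / real n)\<^sup>2 * (\<integral>w. Ugamma \<gamma> X n u w \<partial>M) / 2 \<le> q * t\<^sup>2 / (real n - t) / 2"
    by (simp add: mult.commute)
  have "(\<integral>w. B w \<partial>M)
      = (exp (t * q) - 1 - t * q) * unseen_prob u + (t / real n)\<^sup>2 * (\<integral>w. Ugamma \<gamma> X n u w \<partial>M) / 2"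
    unfolding B_def using u by (simp add: integrable_unseen integrable_Ugamma expectation_unseen)
  also have "\<dots> \<le> q * t\<^sup>2 / (real n - t) / 2 + q * t\<^sup>2 / (real n - t) / 2"
    using unseen_part seen_part by (rule add_mono)
  also have "\<dots> = q * t\<^sup>2 / (real n - t)"
    by (rule field_sum_of_halves)
  finally have EB: "(\<integral>w. B w \<partial>M) \<le> q * t\<^sup>2 / (real n - t)" .
  have "(\<integral>w. exp (t * node_deviation u w) \<partial>M)
      \<le> exp ((\<integral>w. t * node_deviation u w \<partial>M) + (\<integral>w. B w \<partial>M))"
    unfolding B_def using pointwise u
    by (intro integral_exp_le_exp_integral)
      (auto simp: B_def integrable_node_deviation integrable_exp_node_deviation integrable_unseen integrable_Ugamma)
  also have "\<dots> \<le> exp (t * (\<integral>w. node_deviation u w \<partial>M) + q * t\<^sup>2 / (real n - t))"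
    using EB by simp
  finally show ?thesis
    unfolding q_def .
qed

lemma mgf_node_deviation_lower:
  assumes u: "u \<in> A" and t: "0 < t" "t < 3 * real n"
  shows "(\<integral>w. exp ((- t) * node_deviation u w) \<partial>M)
    \<le> exp ((- t) * (\<integral>w. node_deviation u w \<partial>M) + 3 * p_next u * t\<^sup>2 / (3 * real n - t))"
proof -
  define q where "q = p_next u"
  have "0 \<le> q" using p_next_range u by (simp add: q_def)
  have "0 < real n" using n_pos by simp
  define B where "B w = (if Zn X n u w then (t * q)\<^sup>2 / 2 else 0)
    + (t / real n)\<^sup>2 * Ugamma \<gamma> X n u w / (2 * (1 - t / real n / 3))" for w
  have pointwise: "exp ((- t) * node_deviation u w) \<le> 1 + (- t) * node_deviation u w + B w" for w
  proof (cases "Zn X n u w")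
    case True
    have "exp (- (t * q)) - 1 + t * q \<le> (t * q)\<^sup>2 / 2"
      using t \<open>0 \<le> q\<close> by (intro exp_neg_minus_one_plus_le) simp
    then show ?thesis
      using True by (simp add: B_def q_def node_deviation_unseen Ugamma_unseen)
  next
    case False
    have "exp (t / real n * Ugamma \<gamma> X n u w) \<le> 1 + t / real n * Ugamma \<gamma> X n u w
        + (t / real n)\<^sup>2 * Ugamma \<gamma> X n u w / (2 * (1 - t / real n / 3))"
      using t \<open>0 < real n\<close> by (intro exp_le_Bernstein Ugamma_nonneg Ugamma_le_1) (auto simp: field_simps)
    then show ?thesis
      using False by (simp add: B_def node_deviation_seen)
  qed
  have "(t * q)\<^sup>2 / 2 * unseen_prob u \<le> (t * q)\<^sup>2 / 2 * exp (- (real n * q))"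
    using unseen_prob_le_exp[OF u, folded q_def] by (simp add: mult_left_mono)
  also have "\<dots> = t\<^sup>2 / 2 * (q\<^sup>2 * exp (- (real n * q)))"
    by (simp add: power_mult_distrib)
  also have "\<dots> \<le> t\<^sup>2 / 2 * (q / real n)"
    using \<open>0 < real n\<close> \<open>0 \<le> q\<close> by (intro mult_left_mono sq_mult_exp_neg_le) auto
  also have "\<dots> = t\<^sup>2 / 2 * (3 * q / (3 * real n))"
    by simp
  also have "\<dots> \<le> t\<^sup>2 / 2 * (3 * q / (3 * real n - t))"
    using t \<open>0 \<le> q\<close> by (intro mult_left_mono divide_left_mono) auto
  finally have unseen_part: "(t * q)\<^sup>2 / 2 * unseen_prob u \<le> 3 * q * t\<^sup>2 / (3 * real n - t) / 2"
    by (simp add: field_simps)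
  have "(t / real n)\<^sup>2 * (\<integral>w. Ugamma \<gamma> X n u w \<partial>M) / (2 * (1 - t / real n / 3))
      \<le> (t / real n)\<^sup>2 * (real n * q) / (2 * (1 - t / real n / 3))"
    using expectation_Ugamma_le[OF u] t \<open>0 < real n\<close>
    by (intro divide_right_mono mult_left_mono) (auto simp: q_def field_simps)
  also have "\<dots> = 3 * q * t\<^sup>2 / (3 * real n - t) / 2"
    using t \<open>0 < real n\<close> by (simp add: field_simps power2_eq_square)
  finally have seen_part: "(t / real n)\<^sup>2 * (\<integral>w. Ugamma \<gamma> X n u w \<partial>M) / (2 * (1 - t / real n / 3))
      \<le> 3 * q * t\<^sup>2 / (3 * real n - t) / 2" .
  have "(\<integral>w. B w \<partial>M) = (t * q)\<^sup>2 / 2 * unseen_prob u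
      + (t / real n)\<^sup>2 * (\<integral>w. Ugamma \<gamma> X n u w \<partial>M) / (2 * (1 - t / real n / 3))"
    unfolding B_def using u by (simp add: integrable_unseen integrable_Ugamma expectation_unseen)
  also have "\<dots> \<le> 3 * q * t\<^sup>2 / (3 * real n - t) / 2 + 3 * q * t\<^sup>2 / (3 * real n - t) / 2"
    using unseen_part seen_part by (rule add_mono)
  also have "\<dots> = 3 * q * t\<^sup>2 / (3 * real n - t)"
    by (rule field_sum_of_halves)
  finally have EB: "(\<integral>w. B w \<partial>M) \<le> 3 * q * t\<^sup>2 / (3 * real n - t)" .
  have "(\<integral>w. exp ((- t) * node_deviation u w) \<partial>M)
      \<le> exp ((\<integral>w. (- t) * node_deviation u w \<partial>M) + (\<integral>w. B w \<partial>M))"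
    using pointwise u integrable_exp_node_deviation[OF u, of "- t"]
    by (intro integral_exp_le_exp_integral)
      (auto simp: B_def integrable_node_deviation integrable_exp_node_deviation integrable_unseen integrable_Ugamma)
  also have "\<dots> \<le> exp ((- t) * (\<integral>w. node_deviation u w \<partial>M) + 3 * q * t\<^sup>2 / (3 * real n - t))"
    using EB by simp
  finally show ?thesis
    unfolding q_def .
qed

definition deviation :: "'w \<Rightarrow> real" where
  "deviation w = Rn A p \<gamma> X n w - Rhat A \<gamma> X n w"

definition lam_next :: real where
  "lam_next = \<gamma> (n+1) * lam A p"

lemma deviation_eq_sum: "deviation w = (\<Sum>u\<in>A. node_deviation u w)"
proof -
  have "Rn A p \<gamma> X n w = (\<Sum>u\<in>A. if Zn X n u w then p_next u else 0)"
    unfolding Rn_def p_next_def by (intro sum.cong) auto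
  moreover have "Rhat A \<gamma> X n w = (\<Sum>u\<in>A. Ugamma \<gamma> X n u w / real n)"
    unfolding Rhat_def by (simp add: sum_divide_distrib)
  ultimately show ?thesis
    unfolding deviation_def node_deviation_def by (simp add: sum_subtractf)
qed

lemma sum_p_next: "(\<Sum>u\<in>A. p_next u) = lam_next"
  unfolding lam_next_def lam_def p_next_def by (simp add: sum_distrib_left)

lemma lam_nonneg: "0 \<le> lam A p"
  unfolding lam_def using p_range by (intro sum_nonneg) auto

lemma lam_next_range: "0 \<le> lam_next \<and> lam_next \<le> lam A p"
proof -
  have "0 < \<gamma> (n+1)" "\<gamma> (n+1) \<le> 1"
    using \<gamma>_range by auto
  then show ?thesis
    unfolding lam_next_def using lam_nonneg by (simp add: mult_left_le_one_le)
qed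

lemma borel_measurable_deviation[measurable]: "deviation \<in> borel_measurable M"
  unfolding deviation_eq_sum[abs_def] using borel_measurable_node_deviation by simp

lemma deviation_le: "deviation w \<le> lam_next"
  unfolding deviation_eq_sum sum_p_next[symmetric] by (intro sum_mono node_deviation_le)

lemma expectation_deviation_bounds:
  "- lam_next / real n \<le> (\<integral>w. deviation w \<partial>M)" "(\<integral>w. deviation w \<partial>M) \<le> 0"
proof -
  have "(\<integral>w. deviation w \<partial>M) = (\<Sum>u\<in>A. \<integral>w. node_deviation u w \<partial>M)"
    unfolding deviation_eq_sum by (simp add: integrable_node_deviation)
  moreover have "- lam_next / real n = (\<Sum>u\<in>A. - p_next u / real n)"
    by (simp add: sum_p_next[symmetric] sum_negf sum_divide_distrib)
  ultimately show "- lam_next / real n \<le> (\<integral>w. deviation w \<partial>M)" "(\<integral>w. deviation w \<partial>M) \<le> 0"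
    using expectation_node_deviation_bounds by (auto intro: sum_mono sum_nonpos)
qed

lemma
  shows integrable_exp_deviation: "integrable M (\<lambda>w. exp (s * deviation w))"
    and mgf_deviation: "(\<integral>w. exp (s * deviation w) \<partial>M) = (\<Prod>u\<in>A. \<integral>w. exp (s * node_deviation u w) \<partial>M)"
proof -
  have "exp (s * deviation w) = (\<Prod>u\<in>A. exp (s * node_deviation u w))" for w
    unfolding deviation_eq_sum by (simp add: sum_distrib_left exp_sum finite_A)
  moreover have "indep_vars (\<lambda>_. borel) (\<lambda>u w. exp (s * node_deviation u w)) A"
    by (rule indep_vars_node_functions) (metis node_deviation_local)
  ultimately show "integrable M (\<lambda>w. exp (s * deviation w))"
      "(\<integral>w. exp (s * deviation w) \<partial>M) = (\<Prod>u\<in>A. \<integral>w. exp (s * node_deviation u w) \<partial>M)"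
    by (simp_all add: indep_vars_integrable[OF finite_A] indep_vars_lebesgue_integral[OF finite_A]
      integrable_exp_node_deviation)
qed

definition threshold :: "real \<Rightarrow> real" where
  "threshold L = (1 + sqrt 2) * sqrt (lam_next * L / real n) + L / (3 * real n)"

lemma sqrt_variance_eq: "sqrt (2 * (2 * lam_next / real n) * L) = 2 * sqrt (lam_next * L / real n)"
proof -
  have "sqrt (2 * (2 * lam_next / real n) * L) = sqrt (2\<^sup>2 * (lam_next * L / real n))"
    by (rule arg_cong[where f = sqrt]) (simp add: power2_eq_square)
  also have "\<dots> = 2 * sqrt (lam_next * L / real n)"
    by (simp only: real_sqrt_mult real_sqrt_abs abs_numeral)
  finally show ?thesis .
qed

lemma deviation_upper_tail:
  assumes "0 < L"
  shows "prob {w \<in> space M. threshold L < deviation w} \<le> exp (- L)"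
proof (cases "lam_next \<le> threshold L")
  case True
  then have "{w \<in> space M. threshold L < deviation w} = {}"
    using deviation_le by (auto simp: not_less intro: order_trans)
  then show ?thesis
    by (metis exp_ge_zero measure_empty)
next
  case False
  define r where "r = sqrt (lam_next * L / real n)"
  have "0 < real n" using n_pos by simp
  have "0 \<le> r" "r\<^sup>2 = lam_next * L / real n"
    using lam_next_range assms \<open>0 < real n\<close> by (simp_all add: r_def)
  have "0 < lam_next"
    using False \<open>0 \<le> r\<close> assms \<open>0 < real n\<close> unfolding threshold_def r_def[symmetric]
    by (smt (verit) divide_pos_pos mult_nonneg_nonneg real_sqrt_ge_zero)
  have "2 * r + L / real n \<le> threshold L"
    using Bernstein_threshold_le_beta[OF \<open>0 \<le> r\<close> assms \<open>0 < real n\<close> \<open>r\<^sup>2 = _\<close>] False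
    by (simp add: threshold_def r_def)
  then have "{w \<in> space M. threshold L < deviation w} \<subseteq>
      {w \<in> space M. (\<integral>w. deviation w \<partial>M) + sqrt (2 * (2 * lam_next / real n) * L) + 1 / real n * L
        \<le> deviation w}"
    unfolding sqrt_variance_eq r_def[symmetric] using expectation_deviation_bounds(2) by auto
  then have "prob {w \<in> space M. threshold L < deviation w} \<le> prob {w \<in> space M.
      (\<integral>w. deviation w \<partial>M) + sqrt (2 * (2 * lam_next / real n) * L) + 1 / real n * L \<le> deviation w}"
    by (intro finite_measure_mono) measurable
  also have "\<dots> \<le> exp (- L)"
  proof (rule sub_gamma_upper_tail[OF borel_measurable_deviation integrable_exp_deviation])
    fix t :: real
    assume "0 < t" "t < 1 / (1 / real n)"
    then have "t < real n" by simp
    have "(\<integral>w. exp (t * deviation w) \<partial>M)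
        \<le> (\<Prod>u\<in>A. exp (t * (\<integral>w. node_deviation u w \<partial>M) + p_next u * t\<^sup>2 / (real n - t)))"
      unfolding mgf_deviation
      using mgf_node_deviation_upper[OF _ \<open>0 < t\<close> \<open>t < real n\<close>]
      by (intro prod_mono) auto
    also have "\<dots> = exp (t * (\<integral>w. deviation w \<partial>M) + lam_next * t\<^sup>2 / (real n - t))"
      unfolding deviation_eq_sum sum_p_next[symmetric]
      by (simp add: exp_sum[OF finite_A, symmetric] integrable_node_deviation sum.distrib
          sum_distrib_left sum_divide_distrib sum_distrib_right)
    also have "lam_next * t\<^sup>2 / (real n - t) = 2 * lam_next / real n * t\<^sup>2 / (2 * (1 - 1 / real n * t))"
      using \<open>0 < real n\<close> \<open>t < real n\<close> by (simp add: field_simps)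
    finally show "(\<integral>w. exp (t * deviation w) \<partial>M) \<le> exp (t * (\<integral>w. deviation w \<partial>M)
        + 2 * lam_next / real n * t\<^sup>2 / (2 * (1 - 1 / real n * t)))" .
  qed (use \<open>0 < lam_next\<close> \<open>0 < real n\<close> assms in auto)
  finally show ?thesis .
qed

lemma deviation_lower_tail:
  assumes "0 < L"
  shows "prob {w \<in> space M. deviation w < - threshold L - lam A p / real n} \<le> exp (- L)"
proof -
  define r where "r = sqrt (lam_next * L / real n)"
  have "0 < real n" using n_pos by simp
  have "0 \<le> r"
    using lam_next_range assms \<open>0 < real n\<close> by (simp add: r_def)
  then have "2 * r \<le> (1 + sqrt 2) * r"
    by (intro mult_right_mono) auto
  have "0 \<le> lam A p / real n"
    using lam_nonneg by simp
  have "lam_next / real n \<le> lam A p / real n"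
    using lam_next_range by (simp add: divide_right_mono)
  then have "- (\<integral>w. deviation w \<partial>M) \<le> lam A p / real n"
    using expectation_deviation_bounds(1) by linarith
  show ?thesis
  proof (cases "lam_next = 0")
    case True
    \<comment> \<open>no node can still be activated, so \<open>- deviation\<close> is nonnegative with mean zero\<close>
    have "0 < threshold L"
      using assms \<open>0 < real n\<close> by (simp add: threshold_def True)
    have "{w \<in> space M. deviation w < - threshold L - lam A p / real n}
        \<subseteq> {w \<in> space M. threshold L \<le> - deviation w}"
      using \<open>0 \<le> lam A p / real n\<close> by auto
    then have "prob {w \<in> space M. deviation w < - threshold L - lam A p / real n}
        \<le> prob {w \<in> space M. threshold L \<le> - deviation w}"
      by (intro finite_measure_mono) measurable
    also have "\<dots> \<le> (\<integral>w. - deviation w \<partial>M) / threshold L"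
      using deviation_le True \<open>0 < threshold L\<close>
      by (intro integral_Markov_inequality_measure[where A = "space M"])
        (auto simp: integrable_node_deviation deviation_eq_sum)
    also have "\<dots> \<le> 0"
      using expectation_deviation_bounds True \<open>0 < threshold L\<close> by (simp add: divide_nonpos_pos)
    finally show ?thesis
      by (smt (verit) exp_ge_zero)
  next
    case False
    then have "0 < lam_next"
      using lam_next_range by simp
    have "{w \<in> space M. deviation w < - threshold L - lam A p / real n} \<subseteq>
        {w \<in> space M. - (\<integral>w. deviation w \<partial>M) + sqrt (2 * (2 * lam_next / real n) * L)
          + 1 / (3 * real n) * L \<le> - deviation w}"
      unfolding threshold_def sqrt_variance_eq r_def[symmetric]
      using \<open>- (\<integral>w. deviation w \<partial>M) \<le> lam A p / real n\<close> \<open>2 * r \<le> (1 + sqrt 2) * r\<close>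
      by auto
    then have "prob {w \<in> space M. deviation w < - threshold L - lam A p / real n} \<le>
        prob {w \<in> space M. - (\<integral>w. deviation w \<partial>M) + sqrt (2 * (2 * lam_next / real n) * L)
          + 1 / (3 * real n) * L \<le> - deviation w}"
      by (intro finite_measure_mono) measurable
    also have "\<dots> \<le> exp (- L)"
    proof (rule sub_gamma_upper_tail)
      fix t :: real
      assume "0 < t" "t < 1 / (1 / (3 * real n))"
      then have "t < 3 * real n" by simp
      show "integrable M (\<lambda>w. exp (t * - deviation w))"
        using integrable_exp_deviation[of "- t"] by simp
      have "(\<integral>w. exp (t * - deviation w) \<partial>M) = (\<Prod>u\<in>A. \<integral>w. exp ((- t) * node_deviation u w) \<partial>M)"
        using mgf_deviation[of "- t"] by simp
      also have "\<dots> \<le> (\<Prod>u\<in>A. exp ((- t) * (\<integral>w. node_deviation u w \<partial>M)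
          + 3 * p_next u * t\<^sup>2 / (3 * real n - t)))"
        using mgf_node_deviation_lower[OF _ \<open>0 < t\<close> \<open>t < 3 * real n\<close>]
        by (intro prod_mono) auto
      also have "\<dots> = exp (t * - (\<integral>w. deviation w \<partial>M) + 3 * lam_next * t\<^sup>2 / (3 * real n - t))"
        unfolding deviation_eq_sum sum_p_next[symmetric]
        by (simp add: exp_sum[OF finite_A, symmetric] integrable_node_deviation sum.distrib
            sum_distrib_left sum_divide_distrib sum_distrib_right sum_negf sum_subtractf)
      also have "3 * lam_next * t\<^sup>2 / (3 * real n - t)
          = 2 * lam_next / real n * t\<^sup>2 / (2 * (1 - 1 / (3 * real n) * t))"
        using \<open>0 < real n\<close> \<open>t < 3 * real n\<close> by (simp add: field_simps)
      finally show "(\<integral>w. exp (t * - deviation w) \<partial>M) \<le> exp (t * - (\<integral>w. deviation w \<partial>M)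
          + 2 * lam_next / real n * t\<^sup>2 / (2 * (1 - 1 / (3 * real n) * t)))" .
    qed (use \<open>0 < lam_next\<close> \<open>0 < real n\<close> assms in auto)
    finally show ?thesis .
  qed
qed

lemma beta_eq_threshold: "beta A p \<gamma> \<delta> n = threshold (ln (4 / \<delta>))"
  unfolding beta_def threshold_def lam_next_def by (simp add: ac_simps)

theorem prob_deviation_within_beta:
  assumes "0 < \<delta>" "\<delta> < 1"
  shows "prob {w \<in> space M. - beta A p \<gamma> \<delta> n - lam A p / real n \<le> deviation w
    \<and> deviation w \<le> beta A p \<gamma> \<delta> n} \<ge> 1 - \<delta>"
    (is "prob ?good \<ge> _")
proof -
  define L where "L = ln (4 / \<delta>)"
  have "0 < L" "exp (- L) = \<delta> / 4"
    using assms by (simp_all add: L_def exp_minus)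
  let ?above = "{w \<in> space M. threshold L < deviation w}"
  let ?below = "{w \<in> space M. deviation w < - threshold L - lam A p / real n}"
  have "space M - ?good = ?above \<union> ?below"
    by (auto simp: beta_eq_threshold L_def)
  moreover have "?above \<in> events" "?below \<in> events"
    by measurable
  ultimately have "prob (space M - ?good) \<le> prob ?above + prob ?below"
    by (simp add: measure_Un_le)
  also have "\<dots> \<le> \<delta> / 4 + \<delta> / 4"
    using add_mono[OF deviation_upper_tail[OF \<open>0 < L\<close>] deviation_lower_tail[OF \<open>0 < L\<close>]]
    unfolding \<open>exp (- L) = \<delta> / 4\<close> .
  finally have "prob (space M - ?good) \<le> \<delta> / 2"
    by simp
  moreover have "prob (space M - ?good) = 1 - prob ?good"
    by (intro prob_compl) measurable
  ultimately show ?thesis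
    using assms by simp
qed

end

theorem theorem3:
  fixes M :: "'w measure" and A :: "'a set" and p :: "'a \<Rightarrow> real"
    and \<gamma> :: "nat \<Rightarrow> real" and X :: "nat \<Rightarrow> 'a \<Rightarrow> 'w \<Rightarrow> bool"
    and \<delta> :: real and n :: nat
  assumes "prob_space M"
    and "finite A"
    and "\<forall>u\<in>A. 0 \<le> p u \<and> p u \<le> 1"
    and "\<forall>i\<ge>1. 0 < \<gamma> i \<and> \<gamma> i \<le> 1"
    and "\<forall>i j. 1 \<le> i \<longrightarrow> i \<le> j \<longrightarrow> \<gamma> j \<le> \<gamma> i"
    and "prob_space.indep_vars M (\<lambda>_. count_space UNIV) (\<lambda>(i, u). X i u) ({1..} \<times> A)"
    and "\<forall>i\<ge>1. \<forall>u\<in>A. distr M (count_space UNIV) (X i u) = measure_pmf (bernoulli_pmf (\<gamma> i * p u))"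
    and "0 < \<delta>" and "\<delta> < 1"
    and "1 \<le> n"
  shows "measure M {w \<in> space M.
            - beta A p \<gamma> \<delta> n - lam A p / real n \<le> Rn A p \<gamma> X n w - Rhat A \<gamma> X n w
            \<and> Rn A p \<gamma> X n w - Rhat A \<gamma> X n w \<le> beta A p \<gamma> \<delta> n} \<ge> 1 - \<delta>"
proof -
  interpret fatigue_model M A p \<gamma> X n
    using assms by (simp add: fatigue_model_def fatigue_model_axioms_def)
  show ?thesis
    using prob_deviation_within_beta[OF \<open>0 < \<delta>\<close> \<open>\<delta> < 1\<close>] unfolding deviation_def .
qed

end
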